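(* Let $X=\{0,1\}$ and let $G_L$ be the group of automorphisms of the binary tree $X^*$ generated by $a,b$ defined by the wreath recursions $a=\psi_a(a,\mathbb 1)$, $b=\psi_b(b,a)$, where $\psi_a=(0\,1)$ and $\psi_b$ is the identity, i.e. $a(0w)=1a(w)$, $a(1w)=0w$, $b(0w)=0b(w)$, $b(1w)=1a(w)$. Let $\Gamma_n$ denote the Schreier graph of $G_L$ on $X^n$ with respect to $S=\{a,b,a^{-1},b^{-1}\}$. Then: (1) if $m>n\ge1$, the map $\pi:\Gamma_m\to\Gamma_n$, $\pi(x_1\cdots x_m)=x_1\cdots x_n$, is an unramified covering; (2) for every $n\ge1$, $\pi:\Gamma_{n+1}\to\Gamma_n$ is a normal (Galois) covering with Galois group $\mathrm{Gal}(\Gamma_{n+1}|\Gamma_n)\cong\mathbb Z/2\mathbb Z$.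
   Context: Schreier graph $\Gamma_n$: vertex set $X^n$; for every $v\in X^n$ and $s\in S$ an edge joining $v$ and $s(v)$ (the edge from $s$ at $v$ identified with the one from $s^{-1}$ at $s(v)$), so $\Gamma_n$ is a $4$-regular multigraph with loops allowed. A surjective graph map $\pi:\widetilde Y\to Y$ is an unramified covering if for every vertex $u$ of $Y$ and $v\in\pi^{-1}(u)$ it maps the neighbours of $v$ bijectively onto the neighbours of $u$; it is $d$-sheeted if fibres have size $d$, and normal (Galois) if there are $d$ graph automorphisms $\sigma$ of $\widetilde Y$ with $\pi\circ\sigma=\pi$, forming the Galois group. *)

theory Defs
  imports Main "HOL-Library.FuncSet" "HOL-Algebra.Elementary_Groups"
begin

text \<open>A multigraph is given by a vertex set, a set of darts (oriented half-edges),
  the source map and the orientation-reversing involution; an edge is a pair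
  of mutually reverse darts.  The neighbours of a vertex are counted via the
  darts starting there (so a loop contributes twice, as in a 4-regular graph).\<close>

record ('v, 'd) mgraph =
  gverts :: "'v set"
  gdarts :: "'d set"
  gsrc   :: "'d \<Rightarrow> 'v"
  grev   :: "'d \<Rightarrow> 'd"

definition star :: "('v, 'd) mgraph \<Rightarrow> 'v \<Rightarrow> 'd set" where
  "star G v = {d \<in> gdarts G. gsrc G d = v}"

definition graph_map ::
  "('v, 'd) mgraph \<Rightarrow> ('w, 'e) mgraph \<Rightarrow> ('v \<Rightarrow> 'w) \<Rightarrow> ('d \<Rightarrow> 'e) \<Rightarrow> bool" where
  "graph_map G H f g \<longleftrightarrow>
     f \<in> gverts G \<rightarrow> gverts H \<and> g \<in> gdarts G \<rightarrow> gdarts H \<and>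
     (\<forall>d \<in> gdarts G. gsrc H (g d) = f (gsrc G d) \<and> grev H (g d) = g (grev G d))"

definition unramified_covering ::
  "('v, 'd) mgraph \<Rightarrow> ('w, 'e) mgraph \<Rightarrow> ('v \<Rightarrow> 'w) \<Rightarrow> ('d \<Rightarrow> 'e) \<Rightarrow> bool" where
  "unramified_covering G H f g \<longleftrightarrow>
     graph_map G H f g \<and> f ` gverts G = gverts H \<and> g ` gdarts G = gdarts H \<and>
     (\<forall>v \<in> gverts G. bij_betw g (star G v) (star H (f v)))"

definition sheeted ::
  "nat \<Rightarrow> ('v, 'd) mgraph \<Rightarrow> ('w, 'e) mgraph \<Rightarrow> ('v \<Rightarrow> 'w) \<Rightarrow> bool" where
  "sheeted k G H f \<longleftrightarrow> (\<forall>u \<in> gverts H. card {v \<in> gverts G. f v = u} = k)"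

definition deck_transformations ::
  "('v, 'd) mgraph \<Rightarrow> ('v \<Rightarrow> 'w) \<Rightarrow> ('d \<Rightarrow> 'e) \<Rightarrow> (('v \<Rightarrow> 'v) \<times> ('d \<Rightarrow> 'd)) set" where
  "deck_transformations G f g =
     {(\<sigma>, \<tau>). \<sigma> \<in> extensional (gverts G) \<and> \<tau> \<in> extensional (gdarts G) \<and>
        bij_betw \<sigma> (gverts G) (gverts G) \<and> bij_betw \<tau> (gdarts G) (gdarts G) \<and>
        graph_map G G \<sigma> \<tau> \<and>
        (\<forall>v \<in> gverts G. f (\<sigma> v) = f v) \<and> (\<forall>d \<in> gdarts G. g (\<tau> d) = g d)}"

definition galois_group ::
  "('v, 'd) mgraph \<Rightarrow> ('v \<Rightarrow> 'w) \<Rightarrow> ('d \<Rightarrow> 'e) \<Rightarrow> (('v \<Rightarrow> 'v) \<times> ('d \<Rightarrow> 'd)) monoid" where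
  "galois_group G f g =
     \<lparr> carrier = deck_transformations G f g,
       mult = (\<lambda>(\<sigma>, \<tau>) (\<sigma>', \<tau>'). (compose (gverts G) \<sigma> \<sigma>', compose (gdarts G) \<tau> \<tau>')),
       one = (restrict id (gverts G), restrict id (gdarts G)) \<rparr>"

definition normal_covering ::
  "nat \<Rightarrow> ('v, 'd) mgraph \<Rightarrow> ('w, 'e) mgraph \<Rightarrow> ('v \<Rightarrow> 'w) \<Rightarrow> ('d \<Rightarrow> 'e) \<Rightarrow> bool" where
  "normal_covering k G H f g \<longleftrightarrow>
     unramified_covering G H f g \<and> sheeted k G H f \<and> card (deck_transformations G f g) = k"

text \<open>Letters: \<open>False\<close> = 0, \<open>True\<close> = 1.\<close>

fun act_a :: "bool list \<Rightarrow> bool list" where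
  "act_a [] = []"
| "act_a (False # w) = True # act_a w"
| "act_a (True # w) = False # w"

fun act_b :: "bool list \<Rightarrow> bool list" where
  "act_b [] = []"
| "act_b (False # w) = False # act_b w"
| "act_b (True # w) = True # act_a w"

datatype gen = Ga | Gb

fun act :: "gen \<Rightarrow> bool list \<Rightarrow> bool list" where
  "act Ga w = act_a w"
| "act Gb w = act_b w"

text \<open>Schreier graph \<open>\<Gamma>_n\<close>: one edge \<open>(v,s)\<close> joining \<open>v\<close> and \<open>s(v)\<close> for each
  \<open>v \<in> X^n\<close>, \<open>s \<in> {a,b}\<close> (this edge is also the edge from \<open>s\<^sup>-\<^sup>1\<close> at \<open>s(v)\<close>).\<close>
definition schreier :: "nat \<Rightarrow> (bool list, (bool list \<times> gen) \<times> bool) mgraph" where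
  "schreier n =
     \<lparr> gverts = {w. length w = n},
       gdarts = {((w, s), b). length w = n},
       gsrc = (\<lambda>((w, s), b). if b then w else act s w),
       grev = (\<lambda>((w, s), b). ((w, s), \<not> b)) \<rparr>"

definition proj_v :: "nat \<Rightarrow> bool list \<Rightarrow> bool list" where
  "proj_v n w = take n w"

definition proj_d :: "nat \<Rightarrow> (bool list \<times> gen) \<times> bool \<Rightarrow> (bool list \<times> gen) \<times> bool" where
  "proj_d n = (\<lambda>((w, s), b). ((take n w, s), b))"

end

theory Submission
  imports Defs
begin

text \<open>Every generator acts on words letter by letter from the left, so truncation to
  the first \<open>n\<close> letters is equivariant; this makes \<open>\<pi>\<close> a graph map, and since each
  generator is invertible it is a local bijection on stars.  On \<open>X\<^sup>n\<^sup>+\<^sup>1\<close> every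
  generator changes the last letter by a translation depending only on the prefix,
  so flipping the last letter commutes with the action and is a nontrivial deck
  transformation.  Conversely a deck transformation commutes with \<open>a\<close>, which acts
  transitively on each level (it is the odometer), hence is determined by its value
  at one vertex, which lies in a fibre of size two.\<close>

lemma length_act_a [simp]: "length (act_a w) = length w"
  by (induction w rule: act_a.induct) auto

lemma length_act_b [simp]: "length (act_b w) = length w"
  by (induction w rule: act_b.induct) auto

lemma length_act [simp]: "length (act s w) = length w"
  by (cases s) auto

lemma take_act_a: "take n (act_a w) = act_a (take n w)"
  by (induction w arbitrary: n rule: act_a.induct) (auto simp: take_Cons split: nat.splits)

lemma take_act_b: "take n (act_b w) = act_b (take n w)"
  by (induction w arbitrary: n rule: act_b.induct)
    (auto simp: take_Cons take_act_a split: nat.splits)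

lemma take_act: "take n (act s w) = act s (take n w)"
  by (cases s) (auto simp: take_act_a take_act_b)

fun act_a_inv :: "bool list \<Rightarrow> bool list" where
  "act_a_inv [] = []"
| "act_a_inv (True # w) = False # act_a_inv w"
| "act_a_inv (False # w) = True # w"

fun act_b_inv :: "bool list \<Rightarrow> bool list" where
  "act_b_inv [] = []"
| "act_b_inv (False # w) = False # act_b_inv w"
| "act_b_inv (True # w) = True # act_a_inv w"

fun act_inv :: "gen \<Rightarrow> bool list \<Rightarrow> bool list" where
  "act_inv Ga w = act_a_inv w"
| "act_inv Gb w = act_b_inv w"

lemma act_a_act_a_inv [simp]: "act_a (act_a_inv w) = w"
  by (induction w rule: act_a_inv.induct) auto

lemma act_a_inv_act_a [simp]: "act_a_inv (act_a w) = w"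
  by (induction w rule: act_a.induct) auto

lemma length_act_a_inv [simp]: "length (act_a_inv w) = length w"
  by (induction w rule: act_a_inv.induct) auto

lemma act_b_act_b_inv [simp]: "act_b (act_b_inv w) = w"
  by (induction w rule: act_b_inv.induct) auto

lemma act_b_inv_act_b [simp]: "act_b_inv (act_b w) = w"
  by (induction w rule: act_b.induct) auto

lemma length_act_b_inv [simp]: "length (act_b_inv w) = length w"
  by (induction w rule: act_b_inv.induct) auto

lemma act_act_inv [simp]: "act s (act_inv s w) = w"
  by (cases s) auto

lemma act_inv_act [simp]: "act_inv s (act s w) = w"
  by (cases s) auto

lemma length_act_inv [simp]: "length (act_inv s w) = length w"
  by (cases s) auto

lemma act_inj: "act s w = act s w' \<Longrightarrow> w = w'"
  by (metis act_inv_act)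

lemma take_act_inv: "take n (act_inv s w) = act_inv s (take n w)"
  by (metis act_act_inv act_inv_act take_act)

lemma act_a_snoc: "\<exists>c. \<forall>x. act_a (p @ [x]) = act_a p @ [c \<noteq> x]"
proof (induction p rule: act_a.induct)
  case 1
  have "act_a [x] = [True \<noteq> x]" for x
    by (cases x) auto
  then show ?case by auto
qed auto

lemma act_b_snoc: "\<exists>c. \<forall>x. act_b (p @ [x]) = act_b p @ [c \<noteq> x]"
proof (induction p rule: act_b.induct)
  case (3 w)
  then show ?case using act_a_snoc[of w] by auto
next
  case 1
  have "act_b [x] = [False \<noteq> x]" for x
    by (cases x) auto
  then show ?case by auto
qed auto

lemma act_snoc: "\<exists>c. \<forall>x. act s (p @ [x]) = act s p @ [c \<noteq> x]"
  using act_a_snoc act_b_snoc by (cases s) auto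

definition flip_last :: "bool list \<Rightarrow> bool list" where
  "flip_last w = butlast w @ [\<not> last w]"

lemma flip_last_snoc [simp]: "flip_last (p @ [x]) = p @ [\<not> x]"
  by (simp add: flip_last_def)

lemma length_flip_last [simp]: "length w = Suc k \<Longrightarrow> length (flip_last w) = Suc k"
  by (simp add: flip_last_def)

lemma flip_last_flip_last [simp]: "length w = Suc k \<Longrightarrow> flip_last (flip_last w) = w"
  by (cases w rule: rev_cases) auto

lemma flip_last_neq: "length w = Suc k \<Longrightarrow> flip_last w \<noteq> w"
  by (metis flip_last_def last_snoc)

lemma take_flip_last: "length w = Suc n \<Longrightarrow> take n (flip_last w) = take n w"
  by (simp add: flip_last_def butlast_conv_take)

lemma act_flip_last: "length w = Suc k \<Longrightarrow> act s (flip_last w) = flip_last (act s w)"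
proof -
  assume "length w = Suc k"
  then obtain p x where w: "w = p @ [x]"
    by (metis length_Suc_conv_rev)
  obtain c where "\<forall>x. act s (p @ [x]) = act s p @ [c \<noteq> x]"
    using act_snoc by blast
  then show ?thesis unfolding w by simp
qed

lemma take_eq_imp_eq_or_flip_last:
  assumes "length v = Suc n" "length v' = Suc n" "take n v' = take n v"
  shows "v' = v \<or> v' = flip_last v"
proof -
  obtain p x where v: "v = p @ [x]"
    using assms(1) by (metis length_Suc_conv_rev)
  obtain p' x' where v': "v' = p' @ [x']"
    using assms(2) by (metis length_Suc_conv_rev)
  have "p' = p"
    using assms unfolding v v' by simp
  then show ?thesis
    unfolding v v' by (cases x; cases x') auto
qed

lemma funpow_act_a_double_Cons: "(act_a ^^ (2 * k)) (x # w) = x # (act_a ^^ k) w"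
proof (induction k)
  case (Suc k)
  have "act_a (act_a (y # u)) = y # act_a u" for y u
    by (cases y) auto
  with Suc show ?case
    by (simp add: mult_Suc_right)
qed simp

lemma length_funpow_act_a [simp]: "length ((act_a ^^ k) w) = length w"
  by (induction k) auto

lemma act_a_transitive: "length w = length w' \<Longrightarrow> \<exists>k. (act_a ^^ k) w = w'"
proof (induction w arbitrary: w')
  case Nil
  then show ?case by (auto intro: exI[of _ 0])
next
  case (Cons x w)
  then obtain y u where w': "w' = y # u" and "length w = length u"
    by (metis length_Suc_conv)
  show ?case
  proof (cases "x = y")
    case True
    obtain k where "(act_a ^^ k) w = u"
      using Cons.IH \<open>length w = length u\<close> by blast
    then have "(act_a ^^ (2 * k)) (x # w) = w'"
      using True w' funpow_act_a_double_Cons by simp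
    then show ?thesis by blast
  next
    case False
    then obtain t where t: "act_a_inv (y # u) = x # t" "length t = length u"
      by (cases x; cases y) auto
    obtain k where "(act_a ^^ k) w = t"
      using Cons.IH \<open>length w = length u\<close> t(2) by metis
    then have "(act_a ^^ Suc (2 * k)) (x # w) = act_a (act_a_inv (y # u))"
      using t(1) funpow_act_a_double_Cons by simp
    then show ?thesis
      using w' by (metis act_a_act_a_inv)
  qed
qed

lemma gverts_schreier [simp]: "gverts (schreier k) = {w. length w = k}"
  by (simp add: schreier_def)

lemma gdarts_schreier [simp]: "gdarts (schreier k) = {((w, s), b). length w = k}"
  by (simp add: schreier_def)

lemma gsrc_schreier [simp]: "gsrc (schreier k) ((w, s), b) = (if b then w else act s w)"
  by (simp add: schreier_def)

lemma grev_schreier [simp]: "grev (schreier k) ((w, s), b) = ((w, s), \<not> b)"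
  by (simp add: schreier_def)

lemma proj_d_simp [simp]: "proj_d n ((w, s), b) = ((take n w, s), b)"
  by (simp add: proj_d_def)

lemma mem_star_schreier:
  "((w, s), b) \<in> star (schreier k) v \<longleftrightarrow> length w = k \<and> (if b then w else act s w) = v"
  by (simp add: star_def)

lemma graph_map_proj:
  "n \<le> m \<Longrightarrow> graph_map (schreier m) (schreier n) (proj_v n) (proj_d n)"
  by (auto simp: graph_map_def proj_v_def take_act)

lemma proj_v_image: "n \<le> m \<Longrightarrow> proj_v n ` gverts (schreier m) = gverts (schreier n)"
proof (intro equalityI subsetI)
  fix u assume "n \<le> m" "u \<in> gverts (schreier n)"
  then have "u = proj_v n (u @ replicate (m - n) False)"
    "u @ replicate (m - n) False \<in> gverts (schreier m)"
    by (auto simp: proj_v_def)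
  then show "u \<in> proj_v n ` gverts (schreier m)" by blast
qed (auto simp: proj_v_def)

lemma proj_d_image: "n \<le> m \<Longrightarrow> proj_d n ` gdarts (schreier m) = gdarts (schreier n)"
proof (intro equalityI subsetI)
  fix e assume "n \<le> m" "e \<in> gdarts (schreier n)"
  then obtain u s b where "e = ((u, s), b)" "length u = n"
    by auto
  with \<open>n \<le> m\<close> have "e = proj_d n ((u @ replicate (m - n) False, s), b)"
    "((u @ replicate (m - n) False, s), b) \<in> gdarts (schreier m)"
    by auto
  then show "e \<in> proj_d n ` gdarts (schreier m)" by blast
qed auto

lemma bij_betw_proj_d_star:
  assumes "n \<le> m" "length v = m"
  shows "bij_betw (proj_d n) (star (schreier m) v) (star (schreier n) (proj_v n v))"
proof -
  have "inj_on (proj_d n) (star (schreier m) v)"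
  proof (rule inj_onI)
    fix d d'
    assume "d \<in> star (schreier m) v" "d' \<in> star (schreier m) v" "proj_d n d = proj_d n d'"
    moreover obtain w s b w' s' b' where d: "d = ((w, s), b)" "d' = ((w', s'), b')"
      by (metis prod.exhaust)
    ultimately have "s' = s" "b' = b" "(if b then w else act s w) = (if b then w' else act s w')"
      by (auto simp: mem_star_schreier)
    then show "d = d'"
      unfolding d by (cases b) (auto dest: act_inj)
  qed
  moreover have "proj_d n ` star (schreier m) v = star (schreier n) (proj_v n v)"
  proof (intro equalityI subsetI)
    fix e assume "e \<in> proj_d n ` star (schreier m) v"
    then obtain w s b where "e = proj_d n ((w, s), b)" "((w, s), b) \<in> star (schreier m) v"
      by (metis imageE prod.exhaust)
    then show "e \<in> star (schreier n) (proj_v n v)"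
      using assms(1) by (auto simp: mem_star_schreier proj_v_def take_act)
  next
    fix e assume e: "e \<in> star (schreier n) (proj_v n v)"
    then obtain u s b where eq: "e = ((u, s), b)" and "length u = n"
      and src: "(if b then u else act s u) = take n v"
      by (cases e) (auto simp: mem_star_schreier proj_v_def)
    \<comment> \<open>a dart starting at \<open>take n v\<close> lifts to the dart starting at \<open>v\<close> with the same label\<close>
    let ?w = "if b then v else act_inv s v"
    have "take n ?w = u"
      using src by (cases b) (simp_all, metis act_inv_act take_act_inv)
    then have "e = proj_d n ((?w, s), b)" "((?w, s), b) \<in> star (schreier m) v"
      using eq assms by (auto simp: mem_star_schreier)
    then show "e \<in> proj_d n ` star (schreier m) v" by blast
  qed
  ultimately show ?thesis
    by (simp add: bij_betw_def)
qed

lemma unramified_covering_proj: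
  "n \<le> m \<Longrightarrow> unramified_covering (schreier m) (schreier n) (proj_v n) (proj_d n)"
  unfolding unramified_covering_def
  using graph_map_proj proj_v_image proj_d_image bij_betw_proj_d_star by simp

lemma sheeted_two_proj: "sheeted 2 (schreier (Suc n)) (schreier n) (proj_v n)"
  unfolding sheeted_def
proof
  fix u assume "u \<in> gverts (schreier n)"
  then have "{v \<in> gverts (schreier (Suc n)). proj_v n v = u} = {u @ [False], u @ [True]}"
    using take_eq_imp_eq_or_flip_last[of "u @ [False]" n] by (auto simp: proj_v_def)
  then show "card {v \<in> gverts (schreier (Suc n)). proj_v n v = u} = 2"
    by simp
qed

type_synonym dart = "(bool list \<times> gen) \<times> bool"

definition flip_last_dart :: "dart \<Rightarrow> dart" where
  "flip_last_dart = (\<lambda>((w, s), b). ((flip_last w, s), b))"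

lemma flip_last_dart_simp [simp]: "flip_last_dart ((w, s), b) = ((flip_last w, s), b)"
  by (simp add: flip_last_dart_def)

definition deck_id :: "nat \<Rightarrow> (bool list \<Rightarrow> bool list) \<times> (dart \<Rightarrow> dart)" where
  "deck_id n = (restrict id (gverts (schreier (Suc n))), restrict id (gdarts (schreier (Suc n))))"

definition deck_flip :: "nat \<Rightarrow> (bool list \<Rightarrow> bool list) \<times> (dart \<Rightarrow> dart)" where
  "deck_flip n = (restrict flip_last (gverts (schreier (Suc n))),
                  restrict flip_last_dart (gdarts (schreier (Suc n))))"

lemma deck_id_in_deck_transformations:
  "deck_id n \<in> deck_transformations (schreier (Suc n)) (proj_v n) (proj_d n)"
  by (auto simp: deck_id_def deck_transformations_def graph_map_def bij_betw_def inj_on_def)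

lemma deck_flip_in_deck_transformations:
  "deck_flip n \<in> deck_transformations (schreier (Suc n)) (proj_v n) (proj_d n)"
proof -
  let ?V = "gverts (schreier (Suc n))" and ?D = "gdarts (schreier (Suc n))"
  have "bij_betw (restrict flip_last ?V) ?V ?V"
    by (rule bij_betw_byWitness[where f' = flip_last]) (auto)
  moreover have "bij_betw (restrict flip_last_dart ?D) ?D ?D"
    by (rule bij_betw_byWitness[where f' = flip_last_dart])
      (auto)
  moreover have "graph_map (schreier (Suc n)) (schreier (Suc n))
      (restrict flip_last ?V) (restrict flip_last_dart ?D)"
    by (auto simp: graph_map_def act_flip_last)
  ultimately show ?thesis
    by (auto simp: deck_flip_def deck_transformations_def proj_v_def take_flip_last)
qed

lemma deck_id_neq_deck_flip: "deck_id n \<noteq> deck_flip n"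
proof
  assume "deck_id n = deck_flip n"
  then have "fst (deck_id n) (replicate (Suc n) False) =
      fst (deck_flip n) (replicate (Suc n) False)" by simp
  then show False
    using flip_last_neq[of "replicate (Suc n) False"] by (simp add: deck_id_def deck_flip_def)
qed

lemma deck_transformation_dart:
  assumes "(\<sigma>, \<tau>) \<in> deck_transformations (schreier m) (proj_v n) (proj_d n)" "length w = m"
  shows "\<tau> ((w, s), b) = ((\<sigma> w, s), b)"
proof -
  have "proj_d n (\<tau> ((w, s), True)) = proj_d n ((w, s), True)"
    "gsrc (schreier m) (\<tau> ((w, s), True)) = \<sigma> w"
    using assms by (auto simp: deck_transformations_def graph_map_def)
  then have dart: "\<tau> ((w, s), True) = ((\<sigma> w, s), True)"
    by (cases "\<tau> ((w, s), True)") auto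
  have "grev (schreier m) (\<tau> ((w, s), True)) = \<tau> ((w, s), False)"
    using assms by (auto simp: deck_transformations_def graph_map_def)
  with dart show ?thesis
    by (cases b) auto
qed

lemma deck_transformation_commutes_act:
  assumes "(\<sigma>, \<tau>) \<in> deck_transformations (schreier m) (proj_v n) (proj_d n)" "length w = m"
  shows "\<sigma> (act s w) = act s (\<sigma> w)"
proof -
  have "gsrc (schreier m) (\<tau> ((w, s), False)) = \<sigma> (act s w)"
    using assms by (auto simp: deck_transformations_def graph_map_def)
  then show ?thesis
    using deck_transformation_dart[OF assms] by simp
qed

lemma deck_transformation_funpow_act_a:
  assumes "(\<sigma>, \<tau>) \<in> deck_transformations (schreier m) (proj_v n) (proj_d n)" "length w = m"
  shows "\<sigma> ((act_a ^^ k) w) = (act_a ^^ k) (\<sigma> w)"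
  using deck_transformation_commutes_act[OF assms(1), where s = Ga] assms(2)
  by (induction k) auto

lemma deck_transformation_eqI:
  assumes "(\<sigma>, \<tau>) \<in> deck_transformations (schreier m) (proj_v n) (proj_d n)"
    and "(\<sigma>', \<tau>') \<in> deck_transformations (schreier m) (proj_v n) (proj_d n)"
    and "\<And>v. length v = m \<Longrightarrow> \<sigma> v = \<sigma>' v"
  shows "(\<sigma>, \<tau>) = (\<sigma>', \<tau>')"
proof -
  have "\<sigma> \<in> extensional {v. length v = m}" "\<sigma>' \<in> extensional {v. length v = m}"
    "\<tau> \<in> extensional (gdarts (schreier m))" "\<tau>' \<in> extensional (gdarts (schreier m))"
    using assms(1,2) by (auto simp: deck_transformations_def)
  moreover have "\<tau> d = \<tau>' d" if "d \<in> gdarts (schreier m)" for d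
    using that assms by (cases d) (auto simp: deck_transformation_dart)
  ultimately have "\<sigma> = \<sigma>'" "\<tau> = \<tau>'"
    using assms(3) by (auto intro: extensionalityI)
  then show ?thesis by simp
qed

text \<open>Deck transformations commute with \<open>a\<close>, which is transitive on each level.\<close>

lemma deck_transformation_eq_if_agree_at:
  assumes "(\<sigma>, \<tau>) \<in> deck_transformations (schreier m) (proj_v n) (proj_d n)"
    and "(\<sigma>', \<tau>') \<in> deck_transformations (schreier m) (proj_v n) (proj_d n)"
    and "length v0 = m" "\<sigma> v0 = \<sigma>' v0"
  shows "(\<sigma>, \<tau>) = (\<sigma>', \<tau>')"
proof (rule deck_transformation_eqI[OF assms(1,2)])
  fix v :: "bool list" assume "length v = m"
  then obtain k where k: "(act_a ^^ k) v0 = v"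
    using act_a_transitive assms(3) by metis
  show "\<sigma> v = \<sigma>' v"
    unfolding k[symmetric]
    by (simp add: deck_transformation_funpow_act_a[OF assms(1,3)]
        deck_transformation_funpow_act_a[OF assms(2,3)] assms(4))
qed

lemma deck_transformations_eq:
  "deck_transformations (schreier (Suc n)) (proj_v n) (proj_d n) = {deck_id n, deck_flip n}"
proof -
  have "(\<sigma>, \<tau>) \<in> {deck_id n, deck_flip n}"
    if mem: "(\<sigma>, \<tau>) \<in> deck_transformations (schreier (Suc n)) (proj_v n) (proj_d n)" for \<sigma> \<tau>
  proof -
    define v0 :: "bool list" where "v0 = replicate (Suc n) False"
    have "length (\<sigma> v0) = Suc n" "take n (\<sigma> v0) = take n v0"
      using mem by (auto simp: deck_transformations_def graph_map_def proj_v_def v0_def)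
    then have "\<sigma> v0 = fst (deck_id n) v0 \<or> \<sigma> v0 = fst (deck_flip n) v0"
      using take_eq_imp_eq_or_flip_last[of v0 n "\<sigma> v0"]
      by (simp add: v0_def deck_id_def deck_flip_def)
    moreover have v0: "length v0 = Suc n"
      by (simp add: v0_def)
    moreover have "(\<sigma>, \<tau>) = d" if "d \<in> deck_transformations (schreier (Suc n)) (proj_v n) (proj_d n)"
      and "\<sigma> v0 = fst d v0" for d
      using deck_transformation_eq_if_agree_at[OF mem, of "fst d" "snd d", OF _ v0] that by simp
    ultimately show ?thesis
      using deck_id_in_deck_transformations deck_flip_in_deck_transformations by blast
  qed
  then show ?thesis
    using deck_id_in_deck_transformations deck_flip_in_deck_transformations by auto
qed

lemma group_of_two_elements:
  fixes G (structure)
  assumes "carrier G = {e, f}" "\<one> = e"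
    and "e \<otimes> e = e" "e \<otimes> f = f" "f \<otimes> e = f" "f \<otimes> f = e"
  shows "group G"
  by (rule groupI) (auto simp: assms)

lemma iso_integer_mod_group_2:
  fixes G (structure)
  assumes "carrier G = {e, f}" "e \<noteq> f"
    and "e \<otimes> e = e" "e \<otimes> f = f" "f \<otimes> e = f" "f \<otimes> f = e"
  shows "G \<cong> integer_mod_group 2"
proof -
  let ?h = "\<lambda>x. if x = e then (0::int) else 1"
  have c2: "carrier (integer_mod_group 2) = {0, 1}"
    by (auto simp: carrier_integer_mod_group)
  have "?h \<in> hom G (integer_mod_group 2)"
    using assms by (auto simp: hom_def c2)
  moreover have "bij_betw ?h (carrier G) (carrier (integer_mod_group 2))"
    using assms by (auto simp: bij_betw_def inj_on_def c2)
  ultimately show ?thesis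
    unfolding is_iso_def iso_def by blast
qed

lemma galois_group_schreier:
  "carrier (galois_group (schreier (Suc n)) (proj_v n) (proj_d n)) = {deck_id n, deck_flip n}"
  "one (galois_group (schreier (Suc n)) (proj_v n) (proj_d n)) = deck_id n"
  "mult (galois_group (schreier (Suc n)) (proj_v n) (proj_d n)) (deck_id n) (deck_id n) = deck_id n"
  "mult (galois_group (schreier (Suc n)) (proj_v n) (proj_d n)) (deck_id n) (deck_flip n) = deck_flip n"
  "mult (galois_group (schreier (Suc n)) (proj_v n) (proj_d n)) (deck_flip n) (deck_id n) = deck_flip n"
  "mult (galois_group (schreier (Suc n)) (proj_v n) (proj_d n)) (deck_flip n) (deck_flip n) = deck_id n"
  by (auto simp: galois_group_def deck_transformations_eq deck_id_def deck_flip_def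
      compose_def fun_eq_iff)

theorem proposition6p1:
  shows "(\<forall>m n. 1 \<le> n \<and> n < m \<longrightarrow>
            unramified_covering (schreier m) (schreier n) (proj_v n) (proj_d n))
       \<and> (\<forall>n. 1 \<le> n \<longrightarrow>
            normal_covering 2 (schreier (Suc n)) (schreier n) (proj_v n) (proj_d n)
            \<and> group (galois_group (schreier (Suc n)) (proj_v n) (proj_d n))
            \<and> galois_group (schreier (Suc n)) (proj_v n) (proj_d n) \<cong> integer_mod_group 2)"
proof (intro conjI allI impI)
  fix m n :: nat assume "1 \<le> n \<and> n < m"
  then show "unramified_covering (schreier m) (schreier n) (proj_v n) (proj_d n)"
    by (intro unramified_covering_proj) simp
next
  fix n :: nat
  have "card (deck_transformations (schreier (Suc n)) (proj_v n) (proj_d n)) = 2"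
    using deck_id_neq_deck_flip by (simp add: deck_transformations_eq)
  then show "normal_covering 2 (schreier (Suc n)) (schreier n) (proj_v n) (proj_d n)"
    unfolding normal_covering_def using unramified_covering_proj sheeted_two_proj by simp
  show "group (galois_group (schreier (Suc n)) (proj_v n) (proj_d n))"
    by (rule group_of_two_elements[OF galois_group_schreier])
  show "galois_group (schreier (Suc n)) (proj_v n) (proj_d n) \<cong> integer_mod_group 2"
    by (rule iso_integer_mod_group_2[OF galois_group_schreier(1) deck_id_neq_deck_flip
          galois_group_schreier(3-6)])
qed

end
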